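(* Let $\mathcal{X}$ be a finite set and $\underline{Q}$ a lower transition rate operator on $\mathcal{L}(\mathcal{X})$. Then for any $t\ge0$: $\underline{T}_t$ is regularly absorbing if and only if it is 1-step absorbing.
   Context: $\mathcal{L}(\mathcal{X})$ is the set of real-valued functions on $\mathcal{X}$ with pointwise operations and order, real constants identified with constant functions, $\mathbb{I}_A$ the indicator of $A\subseteq\mathcal{X}$, $\mathbb{I}_x\coloneqq\mathbb{I}_{\{x\}}$; $\mathbb{N}=\{1,2,\dots\}$. A lower transition rate operator is a map $\underline{Q}\colon\mathcal{L}(\mathcal{X})\to\mathcal{L}(\mathcal{X})$ such that for all $f,g$, $\lambda\ge0$, $\mu\in\mathbb{R}$, $x,y\in\mathcal{X}$: $\underline{Q}(\mu)=0$; $\underline{Q}(f+g)\ge\underline{Q}f+\underline{Q}g$; $\underline{Q}(\lambda f)=\lambda\underline{Q}f$; $x\ne y\Rightarrow\underline{Q}(\mathbb{I}_y)(x)\ge0$. For each $f$, $t\mapsto\underline{T}_tf$ is the unique solution on $[0,\infty)$ of $\frac{d}{dt}\underline{T}_tf=\underline{Q}\,\underline{T}_tf$ with $\underline{T}_0f=f$ (existence and uniqueness are known); $\underline{T}_t$ denotes the operator $f\mapsto\underline{T}_tf$. For an operator $\underline{T}$ let $\overline{T}f\coloneqq-\underline{T}(-f)$ and powers denote composition. $\underline{T}$ is regularly absorbing if $\mathcal{X}_{\mathrm{RA}}\coloneqq\{x\colon\exists n\in\mathbb{N},\ \min\overline{T}^n\mathbb{I}_x>0\}\neq\emptyset$ and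 for every $x\in\mathcal{X}\setminus\mathcal{X}_{\mathrm{RA}}$ there is $n\in\mathbb{N}$ with $\underline{T}^n\mathbb{I}_{\mathcal{X}_{\mathrm{RA}}}(x)>0$. $\underline{T}$ is 1-step absorbing if $\mathcal{X}_{\mathrm{1A}}\coloneqq\{x\colon\min\overline{T}\mathbb{I}_x>0\}\neq\emptyset$ and $\underline{T}\mathbb{I}_{\mathcal{X}_{\mathrm{1A}}}(x)>0$ for every $x\in\mathcal{X}\setminus\mathcal{X}_{\mathrm{1A}}$. *)

theory Defs
  imports "HOL-Analysis.Analysis"
begin

type_synonym 'x gamble = "'x \<Rightarrow> real"

definition lower_rate_op :: "('x gamble \<Rightarrow> 'x gamble) \<Rightarrow> bool" where
  "lower_rate_op Q \<longleftrightarrow>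
     (\<forall>\<mu>::real. Q (\<lambda>_. \<mu>) = (\<lambda>_. 0)) \<and>
     (\<forall>f g x. Q (\<lambda>y. f y + g y) x \<ge> Q f x + Q g x) \<and>
     (\<forall>(c::real) f. c \<ge> 0 \<longrightarrow> Q (\<lambda>y. c * f y) = (\<lambda>x. c * Q f x)) \<and>
     (\<forall>x y. x \<noteq> y \<longrightarrow> Q (indicator {y}) x \<ge> 0)"

definition generated_by :: "(real \<Rightarrow> 'x gamble \<Rightarrow> 'x gamble) \<Rightarrow> ('x gamble \<Rightarrow> 'x gamble) \<Rightarrow> bool" where
  "generated_by T Q \<longleftrightarrow>
     (\<forall>f. T 0 f = f \<and>
       (\<forall>t\<ge>0. \<forall>x. ((\<lambda>s. T s f x) has_real_derivative Q (T t f) x) (at t within {0..})))"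

definition upper_op :: "('x gamble \<Rightarrow> 'x gamble) \<Rightarrow> 'x gamble \<Rightarrow> 'x gamble" where
  "upper_op T f = (\<lambda>x. - T (\<lambda>y. - f y) x)"

definition X_RA :: "('x::finite gamble \<Rightarrow> 'x gamble) \<Rightarrow> 'x set" where
  "X_RA T = {x. \<exists>n::nat. n \<ge> 1 \<and> Min (range (((upper_op T) ^^ n) (indicator {x}))) > 0}"

definition regularly_absorbing :: "('x::finite gamble \<Rightarrow> 'x gamble) \<Rightarrow> bool" where
  "regularly_absorbing T \<longleftrightarrow> X_RA T \<noteq> {} \<and>
     (\<forall>x \<in> UNIV - X_RA T. \<exists>n::nat. n \<ge> 1 \<and> (T ^^ n) (indicator (X_RA T)) x > 0)"

definition X_1A :: "('x::finite gamble \<Rightarrow> 'x gamble) \<Rightarrow> 'x set" where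
  "X_1A T = {x. Min (range (upper_op T (indicator {x}))) > 0}"

definition one_step_absorbing :: "('x::finite gamble \<Rightarrow> 'x gamble) \<Rightarrow> bool" where
  "one_step_absorbing T \<longleftrightarrow> X_1A T \<noteq> {} \<and>
     (\<forall>x \<in> UNIV - X_1A T. T (indicator (X_1A T)) x > 0)"

end

theory Submission
  imports Defs
begin

text \<open>A comparison principle for the differential equation (a maximum principle for lower
  rate operators) shows that every \<open>T s\<close> is monotone, positively homogeneous, superadditive,
  a semigroup in \<open>s\<close>, and bounded below by \<open>exp (- L * s)\<close> times the identity on nonnegative
  gambles. For such an operator \<open>R\<close> on a finite space, positivity of \<open>R f\<close> at a point depends
  only on the support of \<open>f\<close>; hence the sets where \<open>R ^^ n\<close> maps an indicator to something
  positive are the iterates of one inflationary set map and become constant after \<open>CARD('x)\<close>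
  steps. Since \<open>T t = T (t / CARD('x)) ^^ CARD('x)\<close>, every power \<open>T t ^^ k\<close> with \<open>k \<ge> 1\<close>, and
  likewise every power of the conjugate upper operator, has the same positivity sets as the
  operator itself, and then the \<open>n\<close>-step and the 1-step absorption conditions coincide.\<close>

section \<open>Lower transition rate operators\<close>

lemma lower_rate_op_const: "lower_rate_op Q \<Longrightarrow> Q (\<lambda>_. \<mu>) x = 0"
  unfolding lower_rate_op_def by metis

lemma lower_rate_op_superadd: "lower_rate_op Q \<Longrightarrow> Q f x + Q g x \<le> Q (\<lambda>y. f y + g y) x"
  unfolding lower_rate_op_def by blast

lemma lower_rate_op_scale:
  "lower_rate_op Q \<Longrightarrow> 0 \<le> c \<Longrightarrow> Q (\<lambda>y. c * f y) = (\<lambda>x. c * Q f x)"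
  unfolding lower_rate_op_def by blast

lemma lower_rate_op_indicator_nonneg:
  "lower_rate_op Q \<Longrightarrow> x \<noteq> y \<Longrightarrow> 0 \<le> Q (indicator {y}) x"
  unfolding lower_rate_op_def by blast

lemma lower_rate_op_sum:
  assumes Q: "lower_rate_op Q" and "finite S"
  shows "(\<Sum>y\<in>S. Q (h y) x) \<le> Q (\<lambda>z. \<Sum>y\<in>S. h y z) x"
  using \<open>finite S\<close>
proof (induction S rule: finite_induct)
  case empty
  then show ?case using lower_rate_op_const[OF Q] by simp
next
  case (insert a S)
  then show ?case
    using lower_rate_op_superadd[OF Q, of "h a" x "\<lambda>z. \<Sum>y\<in>S. h y z"] by simp
qed

lemma lower_rate_op_diagonal_bound:
  fixes Q :: "'x::finite gamble \<Rightarrow> 'x gamble"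
  assumes Q: "lower_rate_op Q" and g: "\<And>y. 0 \<le> g y"
  shows "g x * Q (indicator {x}) x \<le> Q g x"
proof -
  have "0 \<le> (\<Sum>y\<in>UNIV - {x}. g y * Q (indicator {y}) x)"
    using g lower_rate_op_indicator_nonneg[OF Q] by (intro sum_nonneg) auto
  then have "g x * Q (indicator {x}) x \<le> (\<Sum>y\<in>UNIV. g y * Q (indicator {y}) x)"
    by (simp add: sum.remove[of UNIV x])
  also have "\<dots> = (\<Sum>y\<in>UNIV. Q (\<lambda>z. g y * indicator {y} z) x)"
    using lower_rate_op_scale[OF Q g] by simp
  also have "\<dots> \<le> Q (\<lambda>z. \<Sum>y\<in>UNIV. g y * indicator {y} z) x"
    by (rule lower_rate_op_sum[OF Q]) simp
  also have "(\<lambda>z. \<Sum>y\<in>UNIV. g y * indicator {y} z) = g"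
    by (auto simp: indicator_def)
  finally show ?thesis .
qed

lemma lower_rate_op_max_principle:
  fixes Q :: "'x::finite gamble \<Rightarrow> 'x gamble"
  assumes Q: "lower_rate_op Q" and max: "\<And>y. w y - v y \<le> w x - v x"
  shows "Q w x \<le> Q v x"
proof -
  define g where "g y = v y - w y - (v x - w x)" for y
  have "0 \<le> g y" for y
    using max[of y] by (simp add: g_def)
  then have "0 \<le> Q g x"
    using lower_rate_op_diagonal_bound[OF Q, of g x] by (simp add: g_def)
  moreover have "Q w x + Q g x \<le> Q (\<lambda>y. w y + g y) x"
    by (rule lower_rate_op_superadd[OF Q])
  moreover have "Q (\<lambda>y. w y + g y) x + Q (\<lambda>_. v x - w x) x \<le> Q v x"
    using lower_rate_op_superadd[OF Q, of "\<lambda>y. w y + g y" x "\<lambda>_. v x - w x"]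
    by (simp add: g_def)
  ultimately show ?thesis
    using lower_rate_op_const[OF Q] by simp
qed

section \<open>Comparison principle\<close>

lemma first_nonneg_time:
  fixes \<phi> :: "real \<Rightarrow> 'x::finite \<Rightarrow> real"
  assumes cont: "\<And>y. continuous_on {0..} (\<lambda>r. \<phi> r y)" and "0 \<le> s" "0 \<le> \<phi> s x"
  obtains s0 y0 where "0 \<le> s0" "0 \<le> \<phi> s0 y0" "\<And>r y. 0 \<le> r \<Longrightarrow> r < s0 \<Longrightarrow> \<phi> r y < 0"
proof -
  define B where "B = {r. 0 \<le> r \<and> (\<exists>y. 0 \<le> \<phi> r y)}"
  have "s \<in> B"
    using assms(2,3) by (auto simp: B_def)
  have bdd: "bdd_below B"
    by (auto simp: B_def intro: bdd_belowI[of _ 0])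
  have "B = (\<Union>y. {0..} \<inter> (\<lambda>r. \<phi> r y) -` {0..})"
    by (auto simp: B_def)
  with cont have "closed B"
    by (simp only:) (intro closed_UN ballI continuous_closed_preimage; simp)
  with \<open>s \<in> B\<close> bdd have "Inf B \<in> B"
    using closed_contains_Inf by blast
  moreover have "\<phi> r y < 0" if "0 \<le> r" "r < Inf B" for r y
  proof (rule ccontr)
    assume "\<not> \<phi> r y < 0"
    with \<open>0 \<le> r\<close> have "r \<in> B"
      by (auto simp: B_def not_less)
    with bdd \<open>r < Inf B\<close> show False
      using cInf_lower not_le by blast
  qed
  ultimately show ?thesis
    using that by (auto simp: B_def)
qed

lemma negative_preserved_if_decreasing_at_max:
  fixes \<phi> \<phi>' :: "real \<Rightarrow> 'x::finite \<Rightarrow> real"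
  assumes deriv: "\<And>s x. 0 \<le> s \<Longrightarrow>
      ((\<lambda>r. \<phi> r x) has_real_derivative \<phi>' s x) (at s within {0..})"
    and start: "\<And>x. \<phi> 0 x < 0"
    and decreasing: "\<And>s x. 0 < s \<Longrightarrow> (\<And>y. \<phi> s y \<le> \<phi> s x) \<Longrightarrow> 0 \<le> \<phi> s x \<Longrightarrow> \<phi>' s x < 0"
    and "0 \<le> s"
  shows "\<phi> s x < 0"
proof (rule ccontr)
  assume "\<not> \<phi> s x < 0"
  moreover have "continuous_on {0..} (\<lambda>r. \<phi> r y)" for y
    using DERIV_continuous[OF deriv] by (auto simp: continuous_on_eq_continuous_within)
  ultimately obtain s0 y0 where "0 \<le> s0" "0 \<le> \<phi> s0 y0"
    and before: "\<And>r y. 0 \<le> r \<Longrightarrow> r < s0 \<Longrightarrow> \<phi> r y < 0"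
    using first_nonneg_time \<open>0 \<le> s\<close> by (metis not_less)
  have "Max (range (\<phi> s0)) \<in> range (\<phi> s0)"
    by (rule Max_in) auto
  then obtain x0 where x0: "\<phi> s0 x0 = Max (range (\<phi> s0))"
    by (metis rangeE)
  have max: "\<phi> s0 y \<le> \<phi> s0 x0" for y
    unfolding x0 by (rule Max_ge) auto
  with \<open>0 \<le> \<phi> s0 y0\<close> have "0 \<le> \<phi> s0 x0"
    by (meson order_trans)
  with start \<open>0 \<le> s0\<close> have "0 < s0"
    by (metis le_less not_le)
  then have "\<phi>' s0 x0 < 0"
    using decreasing max \<open>0 \<le> \<phi> s0 x0\<close> by blast
  moreover have "DERIV (\<lambda>r. \<phi> r x0) s0 :> \<phi>' s0 x0"
  proof -
    have "((\<lambda>r. \<phi> r x0) has_real_derivative \<phi>' s0 x0) (at s0 within {0<..})"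
      by (rule DERIV_subset[OF deriv[OF \<open>0 \<le> s0\<close>]]) auto
    then show ?thesis
      using at_within_open[of s0 "{0<..}"] \<open>0 < s0\<close> by simp
  qed
  ultimately obtain d where "0 < d" and d: "\<forall>h>0. h < d \<longrightarrow> \<phi> s0 x0 < \<phi> (s0 - h) x0"
    using DERIV_neg_dec_left by blast
  define h where "h = min d s0 / 2"
  have "0 < h" "h < d" "h \<le> s0"
    using \<open>0 < d\<close> \<open>0 < s0\<close> by (auto simp: h_def)
  with d \<open>0 \<le> \<phi> s0 x0\<close> before[of "s0 - h" x0] show False
    by auto
qed

lemma lower_rate_op_comparison:
  fixes Q :: "'x::finite gamble \<Rightarrow> 'x gamble" and w v w' v' :: "real \<Rightarrow> 'x gamble"
  assumes Q: "lower_rate_op Q"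
    and dw: "\<And>s x. 0 \<le> s \<Longrightarrow> ((\<lambda>r. w r x) has_real_derivative w' s x) (at s within {0..})"
    and dv: "\<And>s x. 0 \<le> s \<Longrightarrow> ((\<lambda>r. v r x) has_real_derivative v' s x) (at s within {0..})"
    and sub: "\<And>s x. 0 \<le> s \<Longrightarrow> w' s x \<le> Q (w s) x"
    and super: "\<And>s x. 0 \<le> s \<Longrightarrow> Q (v s) x \<le> v' s x"
    and init: "\<And>x. w 0 x \<le> v 0 x"
    and "0 \<le> s"
  shows "w s x \<le> v s x"
proof -
  \<comment> \<open>The perturbation makes the difference negative at time 0 and strictly decreasing
    wherever a nonnegative maximum over the states is attained.\<close>
  have gap: "w s x - v s x - \<epsilon> * exp s < 0" if "0 < \<epsilon>" for \<epsilon>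
  proof (rule negative_preserved_if_decreasing_at_max[where \<phi> = "\<lambda>r y. w r y - v r y - \<epsilon> * exp r"
        and \<phi>' = "\<lambda>r y. w' r y - v' r y - \<epsilon> * exp r"])
    show "((\<lambda>r. w r y - v r y - \<epsilon> * exp r) has_real_derivative w' r y - v' r y - \<epsilon> * exp r)
        (at r within {0..})" if "0 \<le> r" for r y
      using dw[OF that] dv[OF that] by (auto intro!: derivative_eq_intros)
    show "w 0 y - v 0 y - \<epsilon> * exp 0 < 0" for y
      using init[of y] \<open>0 < \<epsilon>\<close> by simp
    show "w' r y - v' r y - \<epsilon> * exp r < 0"
      if "0 < r" and max: "\<And>z. w r z - v r z - \<epsilon> * exp r \<le> w r y - v r y - \<epsilon> * exp r" for r y
    proof -
      have "Q (w r) y \<le> Q (v r) y"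
        using lower_rate_op_max_principle[OF Q] max by simp
      moreover have "0 < \<epsilon> * exp r"
        using \<open>0 < \<epsilon>\<close> by simp
      ultimately show ?thesis
        using sub[of r y] super[of r y] \<open>0 < r\<close> by linarith
    qed
  qed (rule \<open>0 \<le> s\<close>)
  show ?thesis
  proof (rule field_le_epsilon)
    fix e :: real
    assume "0 < e"
    then show "w s x \<le> v s x + e"
      using gap[of "e / exp s"] by simp
  qed
qed

definition pos_homogeneous :: "('x gamble \<Rightarrow> 'x gamble) \<Rightarrow> bool" where
  "pos_homogeneous P \<longleftrightarrow> (\<forall>c f. 0 \<le> c \<longrightarrow> P (\<lambda>y. c * f y) = (\<lambda>x. c * P f x))"

definition superadditive :: "('x gamble \<Rightarrow> 'x gamble) \<Rightarrow> bool" where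
  "superadditive P \<longleftrightarrow> (\<forall>f g x. P f x + P g x \<le> P (\<lambda>y. f y + g y) x)"

definition dominates_scaled_identity :: "('x gamble \<Rightarrow> 'x gamble) \<Rightarrow> bool" where
  "dominates_scaled_identity P \<longleftrightarrow>
     (\<exists>\<delta>>0. \<forall>f. (\<forall>y. 0 \<le> f y) \<longrightarrow> (\<forall>x. \<delta> * f x \<le> P f x))"

lemma generated_by_0: "generated_by T Q \<Longrightarrow> T 0 f = f"
  unfolding generated_by_def by blast

lemma generated_by_deriv:
  "generated_by T Q \<Longrightarrow> 0 \<le> s \<Longrightarrow>
    ((\<lambda>r. T r f x) has_real_derivative Q (T s f) x) (at s within {0..})"
  unfolding generated_by_def by blast

lemma generated_by_unique:
  fixes Q :: "'x::finite gamble \<Rightarrow> 'x gamble"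
  assumes Q: "lower_rate_op Q" and T: "generated_by T Q"
    and du: "\<And>s x. 0 \<le> s \<Longrightarrow> ((\<lambda>r. u r x) has_real_derivative Q (u s) x) (at s within {0..})"
    and "0 \<le> s"
  shows "u s = T s (u 0)"
proof
  fix x
  have "u s x \<le> T s (u 0) x"
    by (rule lower_rate_op_comparison[where v = "\<lambda>r. T r (u 0)",
          OF Q du generated_by_deriv[OF T]]) (simp_all add: generated_by_0[OF T] \<open>0 \<le> s\<close>)
  moreover have "T s (u 0) x \<le> u s x"
    by (rule lower_rate_op_comparison[where w = "\<lambda>r. T r (u 0)",
          OF Q generated_by_deriv[OF T] du]) (simp_all add: generated_by_0[OF T] \<open>0 \<le> s\<close>)
  ultimately show "u s x = T s (u 0) x"
    by (rule order.antisym)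
qed

lemma generated_by_semigroup:
  fixes Q :: "'x::finite gamble \<Rightarrow> 'x gamble"
  assumes Q: "lower_rate_op Q" and T: "generated_by T Q" and "0 \<le> s" "0 \<le> b"
  shows "T (s + b) = T s \<circ> T b"
proof
  fix f
  have "((\<lambda>r. T (r + b) f x) has_real_derivative Q (T (r + b) f) x) (at r within {0..})"
    if "0 \<le> r" for r x
  proof -
    have outer: "((\<lambda>r. T r f x) has_real_derivative Q (T (r + b) f) x)
        (at (r + b) within (\<lambda>r. r + b) ` {0..})"
      by (rule DERIV_subset[OF generated_by_deriv[OF T]]) (use that \<open>0 \<le> b\<close> in auto)
    have inner: "((\<lambda>r. r + b) has_real_derivative 1) (at r within {0..})"
      by (auto intro!: derivative_eq_intros)
    from DERIV_image_chain[OF outer inner] show ?thesis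
      by (simp add: comp_def)
  qed
  from generated_by_unique[OF Q T this \<open>0 \<le> s\<close>]
  show "T (s + b) f = (T s \<circ> T b) f"
    by simp
qed

lemma generated_by_funpow:
  fixes Q :: "'x::finite gamble \<Rightarrow> 'x gamble"
  assumes Q: "lower_rate_op Q" and T: "generated_by T Q" and "0 \<le> h"
  shows "T (real n * h) = T h ^^ n"
proof (induction n)
  case 0
  then show ?case
    by (simp add: generated_by_0[OF T] fun_eq_iff)
next
  case (Suc n)
  have "T (real (Suc n) * h) = T h \<circ> T (real n * h)"
    using generated_by_semigroup[OF Q T \<open>0 \<le> h\<close>, of "real n * h"] \<open>0 \<le> h\<close>
    by (simp add: algebra_simps)
  with Suc show ?case
    by simp
qed

lemma generated_by_mono:
  fixes Q :: "'x::finite gamble \<Rightarrow> 'x gamble"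
  assumes Q: "lower_rate_op Q" and T: "generated_by T Q" and "0 \<le> s"
  shows "mono (T s)"
proof (rule monoI, rule le_funI)
  fix f g :: "'x gamble" and x
  assume "f \<le> g"
  show "T s f x \<le> T s g x"
    by (rule lower_rate_op_comparison[where w = "\<lambda>r. T r f" and v = "\<lambda>r. T r g",
          OF Q generated_by_deriv[OF T] generated_by_deriv[OF T]])
      (use \<open>f \<le> g\<close> \<open>0 \<le> s\<close> in \<open>simp_all add: generated_by_0[OF T] le_fun_def\<close>)
qed

lemma generated_by_pos_homogeneous:
  fixes Q :: "'x::finite gamble \<Rightarrow> 'x gamble"
  assumes Q: "lower_rate_op Q" and T: "generated_by T Q" and "0 \<le> s"
  shows "pos_homogeneous (T s)"
  unfolding pos_homogeneous_def
proof (intro allI impI)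
  fix c :: real and f
  assume "0 \<le> c"
  have "((\<lambda>r. c * T r f x) has_real_derivative Q (\<lambda>x. c * T r f x) x) (at r within {0..})"
    if "0 \<le> r" for r x
    using DERIV_cmult[OF generated_by_deriv[OF T that], of c]
      lower_rate_op_scale[OF Q \<open>0 \<le> c\<close>] by simp
  from generated_by_unique[OF Q T this \<open>0 \<le> s\<close>]
  show "T s (\<lambda>y. c * f y) = (\<lambda>x. c * T s f x)"
    by (simp add: generated_by_0[OF T])
qed

lemma generated_by_superadditive:
  fixes Q :: "'x::finite gamble \<Rightarrow> 'x gamble"
  assumes Q: "lower_rate_op Q" and T: "generated_by T Q" and "0 \<le> s"
  shows "superadditive (T s)"
  unfolding superadditive_def
proof (intro allI)
  fix f g x
  show "T s f x + T s g x \<le> T s (\<lambda>y. f y + g y) x"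
  proof (rule lower_rate_op_comparison[where w = "\<lambda>r x. T r f x + T r g x"
        and w' = "\<lambda>r x. Q (T r f) x + Q (T r g) x" and v = "\<lambda>r. T r (\<lambda>y. f y + g y)",
        OF Q _ generated_by_deriv[OF T]])
    show "((\<lambda>r. T r f x + T r g x) has_real_derivative Q (T r f) x + Q (T r g) x)
        (at r within {0..})" if "0 \<le> r" for r x
      by (intro DERIV_add generated_by_deriv[OF T that])
  qed (simp_all add: generated_by_0[OF T] lower_rate_op_superadd[OF Q] \<open>0 \<le> s\<close>)
qed

lemma generated_by_exp_lower_bound:
  fixes Q :: "'x::finite gamble \<Rightarrow> 'x gamble"
  assumes Q: "lower_rate_op Q" and T: "generated_by T Q"
    and L: "\<And>y. - L \<le> Q (indicator {y}) y" and f: "\<And>y. 0 \<le> f y" and "0 \<le> s"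
  shows "exp (- L * s) * f x \<le> T s f x"
proof -
  \<comment> \<open>\<open>\<lambda>r. exp (- L * r) * f\<close> is a subsolution of the equation.\<close>
  have "- L * (exp (- L * r) * f x) \<le> Q (\<lambda>x. exp (- L * r) * f x) x" for r x
  proof -
    have "exp (- L * r) * f x * - L \<le> exp (- L * r) * f x * Q (indicator {x}) x"
      using L[of x] f[of x] by (intro mult_left_mono) auto
    also have "\<dots> \<le> Q (\<lambda>x. exp (- L * r) * f x) x"
      by (rule lower_rate_op_diagonal_bound[OF Q]) (simp add: f)
    finally show ?thesis
      by (simp add: mult.commute)
  qed
  moreover have "((\<lambda>r. exp (- L * r) * f x) has_real_derivative - L * (exp (- L * s) * f x))
      (at s within {0..})" for s x
    by (auto intro!: derivative_eq_intros)
  ultimately show ?thesis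
    using lower_rate_op_comparison[where w = "\<lambda>r x. exp (- L * r) * f x"
        and w' = "\<lambda>r x. - L * (exp (- L * r) * f x)" and v = "\<lambda>r. T r f",
        OF Q _ generated_by_deriv[OF T]]
      \<open>0 \<le> s\<close> by (simp add: generated_by_0[OF T])
qed

lemma generated_by_dominates_scaled_identity:
  fixes Q :: "'x::finite gamble \<Rightarrow> 'x gamble"
  assumes Q: "lower_rate_op Q" and T: "generated_by T Q" and "0 \<le> s"
  shows "dominates_scaled_identity (T s)"
proof -
  define L where "L = (\<Sum>y\<in>UNIV. \<bar>Q (indicator {y}) y\<bar>)"
  have "\<bar>Q (indicator {y}) y\<bar> \<le> L" for y
    unfolding L_def by (rule member_le_sum) auto
  then have "- L \<le> Q (indicator {y}) y" for y
    by (metis abs_le_iff minus_le_iff)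
  then show ?thesis
    unfolding dominates_scaled_identity_def
    using generated_by_exp_lower_bound[OF Q T _ _ \<open>0 \<le> s\<close>] by (intro exI[of _ "exp (- L * s)"]) auto
qed

section \<open>Positivity sets\<close>

lemma pos_homogeneousD: "pos_homogeneous P \<Longrightarrow> 0 \<le> c \<Longrightarrow> P (\<lambda>y. c * f y) = (\<lambda>x. c * P f x)"
  unfolding pos_homogeneous_def by blast

lemma pos_homogeneous_zero: "pos_homogeneous P \<Longrightarrow> P (\<lambda>_. 0) = (\<lambda>_. 0)"
  using pos_homogeneousD[of P 0] by simp

lemma pos_homogeneous_funpow: "pos_homogeneous P \<Longrightarrow> pos_homogeneous (P ^^ n)"
  by (induction n) (auto simp: pos_homogeneous_def)

lemma mono_pos_homogeneous_indicator_nonneg: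
  assumes "mono P" "pos_homogeneous P"
  shows "0 \<le> P (indicator A) x"
proof -
  have "P (\<lambda>_. 0) \<le> P (indicator A)"
    by (rule monoD[OF \<open>mono P\<close>]) (simp add: le_fun_def)
  then show ?thesis
    using pos_homogeneous_zero[OF \<open>pos_homogeneous P\<close>] by (simp add: le_fun_def)
qed

lemma mono_pos_homogeneous_positive_iff_support:
  fixes P :: "'x::finite gamble \<Rightarrow> 'x gamble"
  assumes "mono P" "pos_homogeneous P" and f: "\<And>y. 0 \<le> f y"
  shows "0 < P f x \<longleftrightarrow> 0 < P (indicator {y. 0 < f y}) x"
proof (cases "{y. 0 < f y} = {}")
  case True
  then have "f = (\<lambda>_. 0)"
    using f by (auto simp: fun_eq_iff not_less intro: order.antisym)
  moreover have "indicator {} = (\<lambda>_::'x. 0::real)"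
    by (rule ext) simp
  ultimately show ?thesis
    using True by simp
next
  case False
  define S where "S = {y. 0 < f y}"
  define c where "c = Min (f ` S)"
  define M where "M = Max (f ` S)"
  have "0 < c" "0 < M"
    using False by (auto simp: c_def M_def S_def Min_gr_iff Max_gr_iff)
  have "c * indicator S y \<le> f y" "f y \<le> M * indicator S y" for y
    using f[of y] by (auto simp: indicator_def c_def M_def S_def not_less)
  then have "P (\<lambda>y. c * indicator S y) x \<le> P f x" "P f x \<le> P (\<lambda>y. M * indicator S y) x"
    using monoD[OF \<open>mono P\<close>] by (auto simp: le_fun_def)
  then have "c * P (indicator S) x \<le> P f x" "P f x \<le> M * P (indicator S) x"
    using pos_homogeneousD[OF \<open>pos_homogeneous P\<close>] \<open>0 < c\<close> \<open>0 < M\<close> by auto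
  with \<open>0 < c\<close> \<open>0 < M\<close> show ?thesis
    unfolding S_def[symmetric]
    by (meson less_le_trans mult_pos_pos zero_less_mult_pos)
qed

definition reach_set :: "('x gamble \<Rightarrow> 'x gamble) \<Rightarrow> 'x set \<Rightarrow> 'x set" where
  "reach_set P A = {x. 0 < P (indicator A) x}"

lemma reach_set_comp:
  fixes P :: "'x::finite gamble \<Rightarrow> 'x gamble"
  assumes "mono P" "pos_homogeneous P" "mono P'" "pos_homogeneous P'"
  shows "reach_set (P \<circ> P') A = reach_set P (reach_set P' A)"
  using mono_pos_homogeneous_positive_iff_support[OF assms(1,2), of "P' (indicator A)"]
    mono_pos_homogeneous_indicator_nonneg[OF assms(3,4)]
  by (simp add: reach_set_def)

lemma reach_set_funpow:
  fixes P :: "'x::finite gamble \<Rightarrow> 'x gamble"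
  assumes "mono P" "pos_homogeneous P"
  shows "reach_set (P ^^ n) A = (reach_set P ^^ n) A"
proof (induction n)
  case 0
  then show ?case
    by (simp add: reach_set_def indicator_def)
next
  case (Suc n)
  have "reach_set (P ^^ Suc n) A = reach_set P (reach_set (P ^^ n) A)"
    unfolding funpow.simps(2)
    by (rule reach_set_comp[OF assms mono_pow[OF assms(1)] pos_homogeneous_funpow[OF assms(2)]])
  also have "\<dots> = (reach_set P ^^ Suc n) A"
    using Suc.IH by simp
  finally show ?case .
qed

lemma dominates_scaled_identity_reach_set:
  assumes "dominates_scaled_identity P"
  shows "A \<subseteq> reach_set P A"
proof
  fix x
  assume "x \<in> A"
  obtain \<delta> where "0 < \<delta>" and "\<delta> * indicator A x \<le> P (indicator A) x"
    using assms by (auto simp: dominates_scaled_identity_def)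
  with \<open>x \<in> A\<close> show "x \<in> reach_set P A"
    by (simp add: reach_set_def)
qed

lemma inflationary_funpow_stable:
  fixes F :: "'x::finite set \<Rightarrow> 'x set"
  assumes inflationary: "\<And>B. B \<subseteq> F B" and "CARD('x) \<le> m"
  shows "(F ^^ m) A = (F ^^ CARD('x)) A"
proof -
  have fixed_from: "(F ^^ (k + j)) A = (F ^^ k) A" if "(F ^^ Suc k) A = (F ^^ k) A" for k j
    by (induction j) (use that in simp_all)
  have "\<exists>k \<le> CARD('x). (F ^^ Suc k) A = (F ^^ k) A"
  proof (rule ccontr)
    assume "\<not> ?thesis"
    then have "k \<le> card ((F ^^ k) A)" if "k \<le> Suc CARD('x)" for k
      using that
    proof (induction k)
      case (Suc k)
      then have "(F ^^ k) A \<subset> (F ^^ Suc k) A"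
        using inflationary[of "(F ^^ k) A"] by auto
      then have "card ((F ^^ k) A) < card ((F ^^ Suc k) A)"
        by (simp add: psubset_card_mono)
      with Suc show ?case
        by simp
    qed simp
    from this[of "Suc CARD('x)"] show False
      using card_mono[of UNIV "(F ^^ Suc CARD('x)) A"] by simp
  qed
  then obtain k where "k \<le> CARD('x)" and "(F ^^ Suc k) A = (F ^^ k) A"
    by blast
  with \<open>CARD('x) \<le> m\<close> show ?thesis
    using fixed_from[of k "m - k"] fixed_from[of k "CARD('x) - k"] by simp
qed

lemma mono_upper_op: "mono P \<Longrightarrow> mono (upper_op P)"
  by (auto simp: mono_def le_fun_def upper_op_def)

lemma pos_homogeneous_upper_op: "pos_homogeneous P \<Longrightarrow> pos_homogeneous (upper_op P)"
  using pos_homogeneousD[of P _ "\<lambda>y. - _ y"] by (simp add: pos_homogeneous_def upper_op_def)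

lemma dominates_scaled_identity_upper_op:
  assumes "pos_homogeneous P" "superadditive P" "dominates_scaled_identity P"
  shows "dominates_scaled_identity (upper_op P)"
proof -
  have "P f x \<le> upper_op P f x" for f x
  proof -
    have "P f x + P (\<lambda>y. - f y) x \<le> P (\<lambda>y. f y + - f y) x"
      using \<open>superadditive P\<close> unfolding superadditive_def by blast
    then show ?thesis
      using pos_homogeneous_zero[OF \<open>pos_homogeneous P\<close>] by (simp add: upper_op_def)
  qed
  with \<open>dominates_scaled_identity P\<close> show ?thesis
    unfolding dominates_scaled_identity_def by (meson order_trans)
qed

lemma upper_op_funpow: "upper_op P ^^ n = upper_op (P ^^ n)"
  by (induction n) (auto simp: upper_op_def fun_eq_iff)

lemma reach_set_funpow_stable:
  fixes R :: "'x::finite gamble \<Rightarrow> 'x gamble"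
  assumes "mono R" "pos_homogeneous R" "dominates_scaled_identity R"
    and "CARD('x) \<le> N" "1 \<le> k"
  shows "reach_set ((R ^^ N) ^^ k) A = reach_set (R ^^ N) A"
proof -
  have "CARD('x) \<le> N * k"
    using assms(4,5) by (metis le_trans mult_le_mono2 mult.right_neutral)
  then show ?thesis
    unfolding funpow_mult reach_set_funpow[OF assms(1,2)]
    using inflationary_funpow_stable[OF dominates_scaled_identity_reach_set[OF assms(3)]] assms(4)
    by metis
qed

section \<open>Absorption\<close>

lemma generated_by_reach_set_funpow:
  fixes Q :: "'x::finite gamble \<Rightarrow> 'x gamble"
  assumes Q: "lower_rate_op Q" and T: "generated_by T Q" and "0 \<le> t" "1 \<le> k"
  shows "reach_set (T t ^^ k) A = reach_set (T t) A"
    and "reach_set (upper_op (T t) ^^ k) A = reach_set (upper_op (T t)) A"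
proof -
  define h where "h = t / CARD('x)"
  have "0 \<le> h"
    using \<open>0 \<le> t\<close> by (simp add: h_def)
  have split: "T t = T h ^^ CARD('x)"
    using generated_by_funpow[OF Q T \<open>0 \<le> h\<close>, of "CARD('x)"] by (simp add: h_def)
  have "mono (T h)" "pos_homogeneous (T h)" "superadditive (T h)" "dominates_scaled_identity (T h)"
    using generated_by_mono generated_by_pos_homogeneous generated_by_superadditive
      generated_by_dominates_scaled_identity Q T \<open>0 \<le> h\<close> by blast+
  then show "reach_set (T t ^^ k) A = reach_set (T t) A"
    unfolding split by (intro reach_set_funpow_stable \<open>1 \<le> k\<close>) auto
  show "reach_set (upper_op (T t) ^^ k) A = reach_set (upper_op (T t)) A"
    unfolding split upper_op_funpow[symmetric]
    by (intro reach_set_funpow_stable mono_upper_op pos_homogeneous_upper_op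
        dominates_scaled_identity_upper_op \<open>1 \<le> k\<close> order_refl) fact+
qed

lemma Min_range_pos_iff:
  fixes g :: "'x::finite \<Rightarrow> real"
  shows "0 < Min (range g) \<longleftrightarrow> (\<forall>y. 0 < g y)"
  by (subst Min_gr_iff) auto

lemma regularly_absorbing_iff_one_step_absorbing_if_reach_set_stable:
  fixes S :: "'x::finite gamble \<Rightarrow> 'x gamble"
  assumes lower: "\<And>k A. 1 \<le> k \<Longrightarrow> reach_set (S ^^ k) A = reach_set S A"
    and upper: "\<And>k A. 1 \<le> k \<Longrightarrow> reach_set (upper_op S ^^ k) A = reach_set (upper_op S) A"
  shows "regularly_absorbing S \<longleftrightarrow> one_step_absorbing S"
proof -
  have "X_RA S = X_1A S"
    using upper by (auto simp: X_RA_def X_1A_def Min_range_pos_iff reach_set_def set_eq_iff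
        intro: exI[of _ 1])
  moreover have "(\<exists>n \<ge> 1. 0 < (S ^^ n) (indicator B) x) \<longleftrightarrow> 0 < S (indicator B) x" for B x
    using lower by (auto simp: reach_set_def set_eq_iff intro: exI[of _ 1])
  ultimately show ?thesis
    by (simp add: regularly_absorbing_def one_step_absorbing_def)
qed

theorem proposition10:
  fixes Q :: "'x::finite gamble \<Rightarrow> 'x gamble"
    and T :: "real \<Rightarrow> 'x gamble \<Rightarrow> 'x gamble"
  assumes "lower_rate_op Q"
    and "generated_by T Q"
    and "t \<ge> 0"
  shows "regularly_absorbing (T t) \<longleftrightarrow> one_step_absorbing (T t)"
  using generated_by_reach_set_funpow[OF assms]
  by (rule regularly_absorbing_iff_one_step_absorbing_if_reach_set_stable)

end
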